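(* Let $W_1,\dots,W_m\in\mathbb{R}^{n\times n}$ be signed adjacency matrices with $W_k\mathbf{1}=\mathbf{1}$ for all $k$. If for every $k\in\{1,\dots,m\}$ the matrix $W_k$ is eventually stochastic and normal, then $\mathbb{W}=\{W_1,\dots,W_m\}$ is a consensus set for the switched system $\mathbf{x}(t+1)=W_{\sigma(t)}\mathbf{x}(t)$.
   Context: $W_k$ are real matrices (entries of any sign). $W$ is eventually positive if there is $t_0\in\mathbb{Z}_{\ge0}$ with $W^t$ entrywise positive for all integers $t\ge t_0$; eventually stochastic means eventually positive and $W\mathbf{1}=\mathbf{1}$. $W$ is normal if $WW^\top=W^\top W$. A switching signal is any map $\sigma:\mathbb{Z}_{\ge0}\to\{1,\dots,m\}$. $\mathbb{W}$ is a consensus set if for every switching signal and every $\mathbf{x}(0)$ there is $\alpha\in\mathbb{R}$ with $\lim_{t\to\infty}\mathbf{x}(t)=\alpha\mathbf{1}$. *)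

theory Defs
  imports "HOL-Analysis.Analysis"
begin

definition ones :: "real^'n" where "ones = (\<chi> i. 1)"

fun matpow :: "real^'n^'n \<Rightarrow> nat \<Rightarrow> real^'n^'n" where
  "matpow W 0 = mat 1"
| "matpow W (Suc t) = W ** matpow W t"

definition eventually_positive :: "real^'n^'n \<Rightarrow> bool" where
  "eventually_positive W \<longleftrightarrow>
     (\<exists>t0::nat. \<forall>t\<ge>t0. \<forall>i j. (matpow W t) $ i $ j > 0)"

definition eventually_stochastic :: "real^'n^'n \<Rightarrow> bool" where
  "eventually_stochastic W \<longleftrightarrow> eventually_positive W \<and> W *v ones = ones"

definition normal_matrix :: "real^'n^'n \<Rightarrow> bool" where
  "normal_matrix W \<longleftrightarrow> W ** transpose W = transpose W ** W"

fun traj :: "(nat \<Rightarrow> real^'n^'n) \<Rightarrow> (nat \<Rightarrow> nat) \<Rightarrow> real^'n \<Rightarrow> nat \<Rightarrow> real^'n" where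
  "traj W \<sigma> x0 0 = x0"
| "traj W \<sigma> x0 (Suc t) = W (\<sigma> t) *v traj W \<sigma> x0 t"

definition consensus_set :: "nat \<Rightarrow> (nat \<Rightarrow> real^'n^'n) \<Rightarrow> bool" where
  "consensus_set m W \<longleftrightarrow>
     (\<forall>\<sigma> :: nat \<Rightarrow> nat. (\<forall>t. \<sigma> t \<in> {1..m}) \<longrightarrow>
        (\<forall>x0. \<exists>\<alpha>::real. traj W \<sigma> x0 \<longlonglongrightarrow> \<alpha> *\<^sub>R ones))"

end

theory Submission imports Defs begin

text \<open>Normality transfers the row-sum condition \<open>W 1 = 1\<close> to \<open>W\<^sup>T 1 = 1\<close>, so every
  \<open>W\<^sub>k\<close> is doubly stochastic: the average of the state is invariant and the deviation from the
  average stays in the hyperplane \<open>1\<^sup>\<bottom>\<close>. A positive doubly stochastic matrix \<open>M\<close> strictly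
  shrinks every nonzero \<open>y \<in> 1\<^sup>\<bottom>\<close>, because \<open>\<parallel>y\<parallel>\<^sup>2 - \<parallel>My\<parallel>\<^sup>2 = \<Sum>\<^sub>i\<^sub>j M\<^sub>i\<^sub>j (y\<^sub>j - (My)\<^sub>i)\<^sup>2\<close>.
  For a normal matrix \<open>\<parallel>W y\<parallel>\<^sup>2 \<le> \<parallel>y\<parallel> \<parallel>W\<^sup>2 y\<parallel>\<close>, so strict shrinking by the positive power
  \<open>W^(2^k)\<close> descends to \<open>W\<close> itself. Compactness of the unit sphere of \<open>1\<^sup>\<bottom>\<close> turns this into a
  contraction factor \<open>c\<^sub>k < 1\<close>, and the largest of the finitely many \<open>c\<^sub>k\<close> makes the deviation
  decay geometrically under any switching signal.\<close>

lemma inner_matrix_vector_mult_transpose: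
  fixes A :: "real^'n^'m"
  shows "inner (A *v x) y = inner x (transpose A *v y)"
  by (metis dot_lmul_matrix inner_commute transpose_matrix_vector)

lemma normal_matrix_norm_transpose:
  fixes M :: "real^'n^'n"
  assumes "normal_matrix M"
  shows "norm (transpose M *v z) = norm (M *v z)"
proof -
  have "(norm (transpose M *v z))\<^sup>2 = inner z ((M ** transpose M) *v z)"
    by (metis inner_matrix_vector_mult_transpose power2_norm_eq_inner inner_commute
        matrix_vector_mul_assoc)
  also have "\<dots> = inner z ((transpose M ** M) *v z)"
    using assms by (simp add: normal_matrix_def)
  also have "\<dots> = (norm (M *v z))\<^sup>2"
    by (metis inner_matrix_vector_mult_transpose power2_norm_eq_inner matrix_vector_mul_assoc)
  finally show ?thesis by (simp add: power2_eq_iff_nonneg)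
qed

lemma normal_matrix_transpose_fixed_vector:
  fixes M :: "real^'n^'n"
  assumes "normal_matrix M" and "M *v v = v"
  shows "transpose M *v v = v"
proof -
  let ?w = "transpose M *v v"
  have "inner ?w v = inner v v"
    using assms(2) inner_matrix_vector_mult_transpose[of "transpose M" v v] by simp
  moreover have "inner ?w ?w = inner v v"
    using normal_matrix_norm_transpose[OF assms(1), of v] assms(2)
    by (simp add: power2_norm_eq_inner[symmetric])
  ultimately have "inner (?w - v) (?w - v) = 0"
    by (simp add: inner_diff_left inner_diff_right inner_commute)
  then show ?thesis by simp
qed

lemma matpow_add: "matpow A (a + b) = matpow A a ** matpow A b"
  by (induction a) (simp_all add: matrix_mul_assoc)

lemma matpow_fixed_vector:
  assumes "A *v v = v"
  shows "matpow A t *v v = v"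
  by (induction t) (simp_all add: assms matrix_vector_mul_assoc[symmetric])

lemma matpow_commute_right:
  assumes "A ** B = B ** A"
  shows "A ** matpow B t = matpow B t ** A"
proof (induction t)
  case (Suc t)
  have "A ** matpow B (Suc t) = (A ** B) ** matpow B t"
    by (simp add: matrix_mul_assoc)
  also have "\<dots> = B ** (A ** matpow B t)"
    by (simp add: assms matrix_mul_assoc)
  also have "\<dots> = matpow B (Suc t) ** A"
    by (simp add: Suc matrix_mul_assoc)
  finally show ?case .
qed simp

lemma matpow_commute:
  assumes "A ** B = B ** A"
  shows "matpow A s ** matpow B t = matpow B t ** matpow A s"
proof (induction s)
  case (Suc s)
  then show ?case
    using matpow_commute_right[OF assms, of t]
    by (simp add: matrix_mul_assoc) (metis matrix_mul_assoc)
qed simp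

lemma matpow_transpose: "transpose (matpow A t) = matpow (transpose A) t"
  by (induction t) (simp_all add: matrix_transpose_mul matpow_commute_right[symmetric])

lemma normal_matrix_matpow:
  assumes "normal_matrix A"
  shows "normal_matrix (matpow A t)"
  using assms matpow_commute[of A "transpose A" t t]
  by (simp add: normal_matrix_def matpow_transpose)

lemma normal_matrix_norm_lt_of_square:
  fixes M :: "real^'n^'n"
  assumes "normal_matrix M" and "norm ((M ** M) *v y) < norm y"
  shows "norm (M *v y) < norm y"
proof -
  have "(norm (M *v y))\<^sup>2 = inner y (transpose M *v (M *v y))"
    by (metis inner_matrix_vector_mult_transpose power2_norm_eq_inner)
  also have "\<dots> \<le> norm y * norm (transpose M *v (M *v y))"
    by (rule norm_cauchy_schwarz)
  also have "\<dots> = norm y * norm ((M ** M) *v y)"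
    using normal_matrix_norm_transpose[OF assms(1), of "M *v y"]
    by (simp add: matrix_vector_mul_assoc)
  also have "\<dots> < norm y * norm y"
    using assms(2) by (intro mult_strict_left_mono) (auto intro: le_less_trans)
  finally have "(norm (M *v y))\<^sup>2 < (norm y)\<^sup>2"
    by (simp add: power2_eq_square)
  then show ?thesis
    using power_less_imp_less_base by fastforce
qed

lemma normal_matrix_norm_lt_of_matpow:
  fixes M :: "real^'n^'n"
  assumes "normal_matrix M" and "norm (matpow M (2 ^ k) *v y) < norm y"
  shows "norm (M *v y) < norm y"
  using assms(2)
proof (induction k)
  case (Suc k)
  have "matpow M (2 ^ Suc k) = matpow M (2 ^ k) ** matpow M (2 ^ k)"
    by (simp add: matpow_add[symmetric] mult_2)
  then have "norm (matpow M (2 ^ k) *v y) < norm y"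
    using Suc.prems normal_matrix_norm_lt_of_square[OF normal_matrix_matpow[OF assms(1)]]
    by metis
  then show ?case by (rule Suc.IH)
qed simp

lemma stochastic_row_variance:
  fixes M :: "real^'n^'n"
  assumes "(\<Sum>j\<in>UNIV. M$i$j) = 1"
  shows "(\<Sum>j\<in>UNIV. M$i$j * (y$j - (M *v y)$i)\<^sup>2)
           = (\<Sum>j\<in>UNIV. M$i$j * (y$j)\<^sup>2) - ((M *v y)$i)\<^sup>2"
proof -
  define u where "u = (M *v y)$i"
  have u: "u = (\<Sum>j\<in>UNIV. M$i$j * y$j)"
    by (simp add: u_def matrix_vector_mult_def)
  have "(\<Sum>j\<in>UNIV. M$i$j * (y$j - u)\<^sup>2)
      = (\<Sum>j\<in>UNIV. M$i$j * (y$j)\<^sup>2) - 2 * u * (\<Sum>j\<in>UNIV. M$i$j * y$j)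
          + u\<^sup>2 * (\<Sum>j\<in>UNIV. M$i$j)"
    by (simp add: power2_eq_square algebra_simps sum.distrib sum_subtractf
        sum_distrib_left)
  also have "\<dots> = (\<Sum>j\<in>UNIV. M$i$j * (y$j)\<^sup>2) - u\<^sup>2"
    using assms u by (simp add: power2_eq_square)
  finally show ?thesis by (simp add: u_def)
qed

lemma doubly_stochastic_norm_defect:
  fixes M :: "real^'n^'n"
  assumes row: "M *v ones = ones" and col: "transpose M *v ones = ones"
  shows "(\<Sum>i\<in>UNIV. \<Sum>j\<in>UNIV. M$i$j * (y$j - (M *v y)$i)\<^sup>2)
           = (norm y)\<^sup>2 - (norm (M *v y))\<^sup>2"
proof -
  have rows: "(\<Sum>j\<in>UNIV. M$i$j) = 1" for i
    using arg_cong[OF row, of "\<lambda>v. v $ i"] by (simp add: matrix_vector_mult_def ones_def)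
  have cols: "(\<Sum>i\<in>UNIV. M$i$j) = 1" for j
    using arg_cong[OF col, of "\<lambda>v. v $ j"] by (simp add: vector_matrix_mult_def ones_def)
  have norm_sq: "(norm x)\<^sup>2 = (\<Sum>j\<in>UNIV. (x$j)\<^sup>2)" for x :: "real^'n"
    unfolding power2_norm_eq_inner inner_vec_def by (simp add: power2_eq_square)
  have "(\<Sum>i\<in>UNIV. \<Sum>j\<in>UNIV. M$i$j * (y$j)\<^sup>2) = (\<Sum>j\<in>UNIV. (\<Sum>i\<in>UNIV. M$i$j) * (y$j)\<^sup>2)"
    by (subst sum.swap) (simp add: sum_distrib_right)
  then show ?thesis
    by (simp add: stochastic_row_variance[OF rows] sum_subtractf cols norm_sq)
qed

lemma positive_doubly_stochastic_norm_lt: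
  fixes M :: "real^'n^'n"
  assumes pos: "\<forall>i j. M $ i $ j > 0" and row: "M *v ones = ones"
    and col: "transpose M *v ones = ones"
    and y: "inner ones y = 0" "y \<noteq> 0"
  shows "norm (M *v y) < norm y"
proof -
  fix i :: 'n
  obtain j where j: "y$j \<noteq> (M *v y)$i"
  proof (rule ccontr)
    assume "\<not> thesis"
    then have "y = (M *v y)$i *\<^sub>R ones"
      using that by (auto simp: vec_eq_iff ones_def)
    moreover have "inner ones (ones :: real^'n) > 0"
      by (simp add: ones_def inner_vec_def)
    ultimately have "y = 0"
      using y(1) by (metis inner_scaleR_right mult_eq_0_iff less_irrefl scaleR_zero_left)
    with y(2) show False ..
  qed
  define D where "D i' = (\<Sum>j'\<in>UNIV. M$i'$j' * (y$j' - (M *v y)$i')\<^sup>2)" for i'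
  have nonneg: "0 \<le> M$i'$j' * (y$j' - (M *v y)$i')\<^sup>2" for i' j'
    using pos by (simp add: less_imp_le)
  have "0 < D i"
    unfolding D_def using pos j by (intro sum_pos2[of UNIV j]) (simp_all add: nonneg)
  then have "0 < (\<Sum>i'\<in>UNIV. D i')"
    by (intro sum_pos2[of UNIV i]) (simp_all add: D_def sum_nonneg nonneg)
  then have "(norm (M *v y))\<^sup>2 < (norm y)\<^sup>2"
    using doubly_stochastic_norm_defect[OF row col, of y] by (simp add: D_def)
  then show ?thesis
    by (rule power_less_imp_less_base) simp
qed

lemma eventually_stochastic_normal_norm_lt:
  fixes W :: "real^'n^'n"
  assumes es: "eventually_stochastic W" and nm: "normal_matrix W"
    and y: "inner ones y = 0" "y \<noteq> 0"
  shows "norm (W *v y) < norm y"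
proof -
  obtain t0 where t0: "\<forall>t\<ge>t0. \<forall>i j. matpow W t $ i $ j > 0" and row: "W *v ones = ones"
    using es unfolding eventually_stochastic_def eventually_positive_def by blast
  let ?M = "matpow W (2 ^ t0)"
  have "\<forall>i j. ?M $ i $ j > 0"
    using t0 less_exp[of t0] by simp
  moreover have row_M: "?M *v ones = ones"
    using matpow_fixed_vector[OF row] .
  moreover have "transpose ?M *v ones = ones"
    using normal_matrix_transpose_fixed_vector[OF normal_matrix_matpow[OF nm] row_M] .
  ultimately have "norm (?M *v y) < norm y"
    using positive_doubly_stochastic_norm_lt y by blast
  then show ?thesis
    using normal_matrix_norm_lt_of_matpow[OF nm] by blast
qed

lemma linear_uniform_contraction_on_subspace:
  fixes f :: "'a::euclidean_space \<Rightarrow> 'b::real_normed_vector"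
  assumes lin: "linear f" and S: "subspace S"
    and strict: "\<forall>y\<in>S. y \<noteq> 0 \<longrightarrow> norm (f y) < norm y"
  shows "\<exists>c. 0 \<le> c \<and> c < 1 \<and> (\<forall>y\<in>S. norm (f y) \<le> c * norm y)"
proof -
  define K where "K = S \<inter> sphere 0 1"
  have normalized: "y /\<^sub>R norm y \<in> K" if "y \<in> S" "y \<noteq> 0" for y
    using that S by (simp add: K_def subspace_scale)
  show ?thesis
  proof (cases "K = {}")
    case True
    then show ?thesis
      using normalized linear_0[OF lin] by (intro exI[of _ 0]) auto
  next
    case False
    have "compact K"
      unfolding K_def using S by (intro closed_Int_compact closed_subspace compact_sphere)
    moreover have "continuous_on K (\<lambda>y. norm (f y))"
      using lin by (intro continuous_on_norm linear_continuous_on)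
        (simp add: linear_conv_bounded_linear)
    ultimately obtain y0 where y0: "y0 \<in> K" and max: "\<forall>y\<in>K. norm (f y) \<le> norm (f y0)"
      using continuous_attains_sup[OF _ False] by blast
    have "norm (f y) \<le> norm (f y0) * norm y" if "y \<in> S" for y
    proof (cases "y = 0")
      case False
      have "norm (f y) / norm y = norm (f (y /\<^sub>R norm y))"
        using lin by (simp add: linear_scale divide_inverse_commute)
      also have "\<dots> \<le> norm (f y0)"
        using max normalized[OF that False] by blast
      finally show ?thesis
        using False by (simp add: divide_le_eq)
    qed (use lin linear_0 in simp)
    moreover have "norm (f y0) < 1"
      using strict y0 by (auto simp: K_def)
    ultimately show ?thesis
      by (intro exI[of _ "norm (f y0)"]) auto
  qed
qed

lemma finite_uniform_contraction_on_subspace: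
  fixes f :: "'k \<Rightarrow> 'a::euclidean_space \<Rightarrow> 'b::real_normed_vector"
  assumes "finite K" and "subspace S" and "\<forall>k\<in>K. linear (f k)"
    and "\<forall>k\<in>K. \<forall>y\<in>S. y \<noteq> 0 \<longrightarrow> norm (f k y) < norm y"
  shows "\<exists>c. 0 \<le> c \<and> c < 1 \<and> (\<forall>k\<in>K. \<forall>y\<in>S. norm (f k y) \<le> c * norm y)"
  using assms(1,3,4)
proof (induction K rule: finite_induct)
  case empty
  then show ?case by (intro exI[of _ 0]) simp
next
  case (insert k K)
  obtain c1 where c1: "0 \<le> c1" "c1 < 1" "\<forall>k\<in>K. \<forall>y\<in>S. norm (f k y) \<le> c1 * norm y"
    using insert.IH insert.prems by auto
  obtain c2 where c2: "0 \<le> c2" "c2 < 1" "\<forall>y\<in>S. norm (f k y) \<le> c2 * norm y"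
    using linear_uniform_contraction_on_subspace[OF _ assms(2)] insert.prems by blast
  have "norm (f k' y) \<le> max c1 c2 * norm y" if "k' \<in> insert k K" "y \<in> S" for k' y
    using that c1(3) c2(3)
    by (auto intro: order_trans[OF _ mult_right_mono[OF max.cobounded1]]
        order_trans[OF _ mult_right_mono[OF max.cobounded2]])
  then show ?case
    using c1 c2 by (intro exI[of _ "max c1 c2"]) auto
qed

lemma LIMSEQ_zero_of_norm_contraction:
  fixes z :: "nat \<Rightarrow> 'a::real_normed_vector"
  assumes "0 \<le> c" "c < 1" and step: "\<And>t. norm (z (Suc t)) \<le> c * norm (z t)"
  shows "z \<longlonglongrightarrow> 0"
proof -
  have bound: "norm (z t) \<le> c ^ t * norm (z 0)" for t
  proof (induction t)
    case (Suc t)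
    have "norm (z (Suc t)) \<le> c * norm (z t)" by (rule step)
    also have "\<dots> \<le> c * (c ^ t * norm (z 0))"
      using Suc assms(1) by (rule mult_left_mono)
    finally show ?case by (simp add: mult.assoc)
  qed simp
  have "(\<lambda>t. c ^ t * norm (z 0)) \<longlonglongrightarrow> 0"
    using assms(1,2) by (intro tendsto_mult_left_zero LIMSEQ_power_zero) simp
  then show ?thesis
    by (rule Lim_null_comparison[rotated]) (simp add: bound)
qed

lemma traj_tendsto_average:
  fixes W :: "nat \<Rightarrow> real^'n^'n"
  assumes row: "\<And>t. W (\<sigma> t) *v ones = ones"
    and col: "\<And>t. transpose (W (\<sigma> t)) *v ones = ones"
    and c: "0 \<le> c" "c < 1"
    and contract: "\<And>t y. inner ones y = 0 \<Longrightarrow> norm (W (\<sigma> t) *v y) \<le> c * norm y"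
  shows "traj W \<sigma> x0 \<longlonglongrightarrow> (inner ones x0 / real CARD('n)) *\<^sub>R ones"
proof -
  define \<alpha> where "\<alpha> = inner ones x0 / real CARD('n)"
  define z where "z t = traj W \<sigma> x0 t - \<alpha> *\<^sub>R ones" for t
  have average: "inner ones (traj W \<sigma> x0 t) = inner ones x0" for t
  proof (induction t)
    case (Suc t)
    have "inner ones (traj W \<sigma> x0 (Suc t))
        = inner (transpose (W (\<sigma> t)) *v ones) (traj W \<sigma> x0 t)"
      by (metis traj.simps(2) inner_commute inner_matrix_vector_mult_transpose)
    then show ?case
      using Suc by (simp only: col)
  qed simp
  have "inner ones (ones :: real^'n) = real CARD('n)"
    by (simp add: ones_def inner_vec_def)
  then have z_perp: "inner ones (z t) = 0" for t
    by (simp add: z_def \<alpha>_def inner_diff_right average)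
  have "z (Suc t) = W (\<sigma> t) *v z t" for t
    by (simp add: z_def row matrix_vector_mult_diff_distrib matrix_vector_mult_scaleR)
  then have "z \<longlonglongrightarrow> 0"
    using c contract z_perp by (intro LIMSEQ_zero_of_norm_contraction) auto
  then have "(\<lambda>t. z t + \<alpha> *\<^sub>R ones) \<longlonglongrightarrow> 0 + \<alpha> *\<^sub>R ones"
    by (intro tendsto_add tendsto_const)
  then show ?thesis
    by (simp add: z_def \<alpha>_def)
qed

theorem theorem8:
  fixes m :: nat and W :: "nat \<Rightarrow> real^'n^'n"
  assumes row_sums: "\<forall>k\<in>{1..m}. W k *v ones = ones"
    and ev_stoch: "\<forall>k\<in>{1..m}. eventually_stochastic (W k)"
    and normal: "\<forall>k\<in>{1..m}. normal_matrix (W k)"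
  shows "consensus_set m W"
  unfolding consensus_set_def
proof (intro allI impI)
  fix \<sigma> :: "nat \<Rightarrow> nat" and x0 :: "real^'n"
  assume \<sigma>: "\<forall>t. \<sigma> t \<in> {1..m}"
  obtain c where c: "0 \<le> c" "c < 1"
    and contract: "\<forall>k\<in>{1..m}. \<forall>y\<in>{y. inner ones y = 0}. norm (W k *v y) \<le> c * norm y"
    using finite_uniform_contraction_on_subspace[of "{1..m}" "{y. inner ones y = 0}"
        "\<lambda>k. (*v) (W k)"]
      subspace_hyperplane matrix_vector_mul_linear
      eventually_stochastic_normal_norm_lt ev_stoch normal
    by fastforce
  have col: "transpose (W k) *v ones = ones" if "k \<in> {1..m}" for k
    using normal_matrix_transpose_fixed_vector normal row_sums that by blast
  have "traj W \<sigma> x0 \<longlonglongrightarrow> (inner ones x0 / real CARD('n)) *\<^sub>R ones"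
    using \<sigma> row_sums col contract by (intro traj_tendsto_average[OF _ _ c]) auto
  then show "\<exists>\<alpha>. traj W \<sigma> x0 \<longlonglongrightarrow> \<alpha> *\<^sub>R ones" ..
qed

end
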